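(* Let $D\geq2d+1$, $0<\delta<\Delta/3$ and $k\in\{2,\ldots,D\}$, with the setting and standing assumptions of the context. Let $\mathcal{A}_{k,\delta}$ be the set of $c$ such that $\|c\|<a_{0}$ and $F_{c}(x_{1})\neq F_{c}(\phi_{c}^{k-1}(x_{1}))$ for every $x_{1}\in K$ satisfying $\|x_{1}-\xi_{j}(c)\|\geq3\delta$ for all $j\in\{1,\ldots,m\}$. Then every point of the open ball $\{c:\|c\|<a_{0}\}$ is a Lebesgue point of $\mathcal{A}_{k,\delta}$, and therefore the probability of $\mathcal{A}_{k,\delta}$ relative to this ball is $1$.
   Context: Notation: $\pi_{i}$ is the $i$-th coordinate projection on $\mathbb{R}^{d}$, $\mathbf{e}_{1}=(1,0,\ldots,0)$; for $\alpha\in\mathbb{Z}_{\geq0}^{d}$, $p_{\alpha}(x)=\prod_i(\pi_{i}x)^{\alpha_{i}}$; $\mathcal{I}_{2D-1}$ is the set of $\alpha$ with $|\alpha|\leq2D-1$, of cardinality $D_{\alpha}$; $c=(c_{\alpha})\in\mathbb{R}^{D_{\alpha}}$ with Euclidean norm. $\phi:\mathbb{R}^{d}\to\mathbb{R}^{d}$ is a diffeomorphism, $\phi_{c}(x)=\phi(x)+\mathbf{e}_{1}\sum_{\alpha}c_{\alpha}p_{\alpha}(x)$, and $F_{c}(x)=(\pi_{1}x,\pi_{1}\phi_{c}(x),\ldots,\pi_{1}\phi_{c}^{D-1}(x))$. Standing assumptions: $K$ is a compact ball centered at the origin, $K^{+}\supset K$ a larger compact ball with $\phi^{j}(x)\in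 K^{+}$ for $x\in K$, $0\leq j\leq D-1$; $a_{0}>0$ is such that $\phi_{c}^{j}(x)\in K^{+}$ for $x\in K$, $0\leq j\leq D-1$, $\|c\|\leq a_{0}$; and for all $\|c\|\leq a_{0}$: $\phi_{c}$ is a $C^{3}$ diffeomorphism; $\phi_{c}$ has exactly $m$ fixed points $\xi_{1}(c),\ldots,\xi_{m}(c)$ (labelled consistently in $c$); no other periodic points of period $<2D$; all fixed points hyperbolic with $\pi_{1}\xi_{i}(c)\neq\pi_{1}\xi_{j}(c)$ for $i\neq j$; $F_{c}$ immersive at each fixed point. $\Delta$ is the minimum distance between distinct fixed points of $\phi_{c}$ lying in $K$, over $\|c\|\leq a_{0}$. A point $\mathfrak{a}$ is a Lebesgue point of a measurable set $A$ if $\mu(A\cap B_{\epsilon}(\mathfrak{a}))/\mu(B_{\epsilon}(\mathfrak{a}))\to1$ as $\epsilon\to0$ ($B_\epsilon$ open ball, $\mu$ Lebesgue measure); probability of $A$ relative to $B$ is $\mu(A\cap B)/\mu(B)$. *)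

theory Defs
  imports "HOL-Analysis.Analysis"
begin

definition monom_p :: "('n::finite \<Rightarrow> nat) \<Rightarrow> real^'n \<Rightarrow> real" where
  "monom_p \<alpha> x = (\<Prod>i\<in>UNIV. (x $ i) ^ (\<alpha> i))"

definition multi_idx :: "nat \<Rightarrow> ('n::finite \<Rightarrow> nat) set" where
  "multi_idx N = {\<alpha>. (\<Sum>i\<in>UNIV. \<alpha> i) \<le> N}"

(* phi_c(x) = phi(x) + e_1 * sum_alpha c_alpha p_alpha(x); coordinates of c are
   enumerated by idx :: 'm => multi-index; i1 is the first coordinate *)
definition perturb ::
  "'n::finite \<Rightarrow> ('m::finite \<Rightarrow> ('n \<Rightarrow> nat)) \<Rightarrow> (real^'n \<Rightarrow> real^'n)
     \<Rightarrow> real^'m \<Rightarrow> real^'n \<Rightarrow> real^'n" where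
  "perturb i1 idx \<phi> c x = \<phi> x + (\<Sum>a\<in>UNIV. c $ a * monom_p (idx a) x) *\<^sub>R axis i1 1"

definition delay_map :: "'n::finite \<Rightarrow> nat \<Rightarrow> (real^'n \<Rightarrow> real^'n) \<Rightarrow> real^'n \<Rightarrow> real list" where
  "delay_map i1 D f x = map (\<lambda>j. ((f ^^ j) x) $ i1) [0..<D]"

definition delay_immersive :: "'n::finite \<Rightarrow> nat \<Rightarrow> (real^'n \<Rightarrow> real^'n) \<Rightarrow> real^'n \<Rightarrow> bool" where
  "delay_immersive i1 D f x \<longleftrightarrow>
     (\<exists>L :: nat \<Rightarrow> real^'n \<Rightarrow> real.
        (\<forall>j<D. ((\<lambda>y. ((f ^^ j) y) $ i1) has_derivative L j) (at x)) \<and>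
        (\<forall>v. (\<forall>j<D. L j v = 0) \<longrightarrow> v = 0))"

definition C3 :: "('a::real_normed_vector \<Rightarrow> 'b::real_normed_vector) \<Rightarrow> bool" where
  "C3 f \<longleftrightarrow> (\<exists>(Df :: 'a \<Rightarrow> 'a \<Rightarrow>\<^sub>L 'b) (D2f :: 'a \<Rightarrow> 'a \<Rightarrow>\<^sub>L ('a \<Rightarrow>\<^sub>L 'b))
         (D3f :: 'a \<Rightarrow> 'a \<Rightarrow>\<^sub>L ('a \<Rightarrow>\<^sub>L ('a \<Rightarrow>\<^sub>L 'b))).
      (\<forall>x. (f has_derivative blinfun_apply (Df x)) (at x)) \<and>
      (\<forall>x. (Df has_derivative blinfun_apply (D2f x)) (at x)) \<and>
      (\<forall>x. (D2f has_derivative blinfun_apply (D3f x)) (at x)) \<and>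
      continuous_on UNIV D3f)"

definition C3_diffeo :: "('a::real_normed_vector \<Rightarrow> 'a) \<Rightarrow> bool" where
  "C3_diffeo f \<longleftrightarrow> bij f \<and> C3 f \<and> C3 (inv f)"

definition hyperbolic_fp :: "(real^'n::finite \<Rightarrow> real^'n) \<Rightarrow> real^'n \<Rightarrow> bool" where
  "hyperbolic_fp f x \<longleftrightarrow> f x = x \<and>
     (\<exists>L. (f has_derivative L) (at x) \<and>
        (\<forall>z::complex. cmod z = 1 \<longrightarrow>
           det (\<chi> i j. complex_of_real (matrix L $ i $ j) - (if i = j then z else 0)) \<noteq> 0))"

definition lebesgue_point :: "('a::euclidean_space) set \<Rightarrow> 'a \<Rightarrow> bool" where
  "lebesgue_point A p \<longleftrightarrow>
     ((\<lambda>\<epsilon>. measure lebesgue (A \<inter> ball p \<epsilon>) / measure lebesgue (ball p \<epsilon>)) \<longlongrightarrow> 1) (at_right 0)"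

definition rel_prob :: "('a::euclidean_space) set \<Rightarrow> 'a set \<Rightarrow> real" where
  "rel_prob A B = measure lebesgue (A \<inter> B) / measure lebesgue B"

end

theory Submission
  imports Defs
begin

(*
  The parameters c for which F_c identifies a point x1 away from the fixed points with its
  (k-1)-st iterate are the projection to parameter space of the set Z of pairs (c, x) with
  x not fixed by phi_c and G_j(c, x) = 0 for j < D, where
  G_j(c, x) = pi_1 phi_c^j x - pi_1 phi_c^(j+k-1) x.  Because phi_c has no periodic points
  of period below 2D, the orbit points x, phi_c x, ..., phi_c^(D+k-2) x are distinct, so one
  can perturb c along polynomials of degree < 2D interpolating on that orbit; this makes
  the differentials of the G_j in the parameter directions lower triangular with nonzero
  diagonal, hence linearly independent.  Near each of its points Z is then mapped
  bi-Lipschitzly into a hyperplane, and since D > d its projection to parameter space is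
  a Lipschitz image of a null set in a space of the same dimension, hence null.  A set that
  differs from an open ball by a null set has full density at every point of the ball.
*)

section \<open>Linear algebra\<close>

definition lower_triangular_pairing :: "nat \<Rightarrow> (nat \<Rightarrow> 'a \<Rightarrow> real) \<Rightarrow> (nat \<Rightarrow> 'a) \<Rightarrow> bool" where
  "lower_triangular_pairing D L u \<longleftrightarrow>
     (\<forall>i j. i < j \<longrightarrow> j < D \<longrightarrow> L i (u j) = 0) \<and> (\<forall>j<D. L j (u j) \<noteq> 0)"

lemma lower_triangular_pairing_coeffs_zero:
  fixes L :: "nat \<Rightarrow> 'a::euclidean_space \<Rightarrow> real"
  assumes tri: "lower_triangular_pairing D L u"
    and lin: "\<And>j. j < D \<Longrightarrow> linear (L j)"
    and vanish: "\<And>i. i < D \<Longrightarrow> L i (\<Sum>j<D. \<mu> j *\<^sub>R u j) = 0"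
    and "j < D"
  shows "\<mu> j = 0"
  using \<open>j < D\<close>
proof (induction j rule: less_induct)
  case (less j)
  have "L j (\<Sum>i<D. \<mu> i *\<^sub>R u i) = (\<Sum>i<D. \<mu> i * L j (u i))"
    using lin[OF less.prems] by (simp add: linear_sum linear_scale)
  also have "\<dots> = \<mu> j * L j (u j)"
  proof (rule sum.remove[THEN trans])
    have "\<mu> i * L j (u i) = 0" if "i < D" "i \<noteq> j" for i
      using less.IH[of i] tri that less.prems
      by (cases "i < j") (auto simp: lower_triangular_pairing_def)
    then have "(\<Sum>i\<in>{..<D} - {j}. \<mu> i * L j (u i)) = 0"
      by (intro sum.neutral) auto
    then show "\<mu> j * L j (u j) + (\<Sum>i\<in>{..<D} - {j}. \<mu> i * L j (u i)) = \<mu> j * L j (u j)"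
      by simp
  qed (use less.prems in auto)
  finally have "\<mu> j * L j (u j) = 0" using vanish[OF less.prems] by simp
  then show ?case using tri less.prems by (simp add: lower_triangular_pairing_def)
qed

lemma lower_triangular_pairing_independent:
  fixes L :: "nat \<Rightarrow> 'a::euclidean_space \<Rightarrow> real"
  assumes tri: "lower_triangular_pairing D L u" and lin: "\<And>j. j < D \<Longrightarrow> linear (L j)"
  shows "inj_on u {..<D}" and "independent (u ` {..<D})"
proof -
  show inj: "inj_on u {..<D}"
  proof (rule inj_onI)
    fix i j assume i: "i \<in> {..<D}" and j: "j \<in> {..<D}" and "u i = u j"
    moreover have "L i (u i) \<noteq> 0" "L j (u j) \<noteq> 0"
      and "i < j \<Longrightarrow> L i (u j) = 0" "j < i \<Longrightarrow> L j (u i) = 0"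
      using tri i j by (auto simp: lower_triangular_pairing_def)
    ultimately show "i = j" by (cases i j rule: linorder_cases) auto
  qed
  show "independent (u ` {..<D})"
    unfolding independent_explicit
  proof (intro conjI allI impI ballI)
    fix c v assume "(\<Sum>v\<in>u ` {..<D}. c v *\<^sub>R v) = 0" and v: "v \<in> u ` {..<D}"
    then have "(\<Sum>j<D. c (u j) *\<^sub>R u j) = 0" by (simp add: sum.reindex[OF inj])
    then have "c (u j) = 0" if "j < D" for j
      using lower_triangular_pairing_coeffs_zero[OF tri lin, of "\<lambda>j. c (u j)"] lin that
      by (simp add: linear_0)
    then show "c v = 0" using v by auto
  qed simp
qed

lemma linear_basis_map_sum:
  assumes "linear Q" and QB: "\<And>v. v \<in> B \<Longrightarrow> Q v = (if v \<in> U then 0 else e v)" and "finite B"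
  shows "Q (\<Sum>v\<in>B. r v *\<^sub>R v) = (\<Sum>v\<in>B - U. r v *\<^sub>R e v)"
proof -
  have "Q (\<Sum>v\<in>B. r v *\<^sub>R v) = (\<Sum>v\<in>B. r v *\<^sub>R (if v \<in> U then 0 else e v))"
    using \<open>linear Q\<close> QB by (simp add: linear_sum linear_scale cong: sum.cong)
  also have "\<dots> = (\<Sum>v\<in>B - U. r v *\<^sub>R e v)"
    by (rule sum.mono_neutral_cong_right) (use \<open>finite B\<close> in auto)
  finally show ?thesis .
qed

lemma linear_basis_map_kernel_subset_span:
  fixes Q :: "'a::euclidean_space \<Rightarrow> 'b::euclidean_space"
  assumes "linear Q" and QB: "\<And>v. v \<in> B \<Longrightarrow> Q v = (if v \<in> U then 0 else e v)"
    and "finite B" "UNIV \<subseteq> span B" "U \<subseteq> B"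
    and e: "e ` (B - U) \<subseteq> Basis" and inj_e: "inj_on e (B - U)"
    and "Q h = 0"
  shows "h \<in> span U"
proof -
  obtain r where h: "h = (\<Sum>v\<in>B. r v *\<^sub>R v)"
    using \<open>UNIV \<subseteq> span B\<close> unfolding span_finite[OF \<open>finite B\<close>] by blast
  note Q_sum = linear_basis_map_sum[OF \<open>linear Q\<close> QB \<open>finite B\<close>]
  have "r v = 0" if v: "v \<in> B - U" for v
  proof -
    have "e v \<bullet> e w = 0" if w: "w \<in> B - U - {v}" for w
    proof -
      have "e v \<noteq> e w" using inj_e v w by (auto dest: inj_onD)
      moreover have "e v \<in> Basis" "e w \<in> Basis" using e v w by auto
      ultimately show ?thesis by (simp add: inner_not_same_Basis)
    qed
    then have "(\<Sum>w\<in>B - U - {v}. r w * (e v \<bullet> e w)) = 0" by (intro sum.neutral) simp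
    moreover have "e v \<bullet> e v = 1" using e v by auto
    moreover have "e v \<bullet> Q h = r v * (e v \<bullet> e v) + (\<Sum>w\<in>B - U - {v}. r w * (e v \<bullet> e w))"
      using \<open>finite B\<close> v by (simp add: h Q_sum inner_sum_right inner_add_right sum.remove)
    ultimately show ?thesis using \<open>Q h = 0\<close> by simp
  qed
  then have "h = (\<Sum>v\<in>U. r v *\<^sub>R v)"
    unfolding h by (intro sum.mono_neutral_right \<open>finite B\<close> \<open>U \<subseteq> B\<close>) auto
  then show "h \<in> span U" by (simp add: span_sum span_scale span_base)
qed

lemma obtain_hyperplane_map_with_kernel_in_span:
  fixes U :: "'a::euclidean_space set"
  assumes indep: "independent U" and dim: "DIM('a) < DIM('b::euclidean_space) + card U"
  obtains Q :: "'a \<Rightarrow> 'b::euclidean_space" and a where "linear Q" "a \<noteq> 0" "\<And>h. a \<bullet> Q h = 0"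
    "\<And>h. Q h = 0 \<Longrightarrow> h \<in> span U"
proof -
  obtain B where UB: "U \<subseteq> B" and indB: "independent B" and spB: "UNIV \<subseteq> span B"
    by (rule maximal_independent_subset_extend[OF subset_UNIV indep])
  have finB: "finite B" using independent_bound[OF indB] by simp
  have finU: "finite U" using finite_subset[OF UB finB] .
  obtain a :: 'b where a: "a \<in> Basis" using nonempty_Basis by blast
  have "card B = DIM('a)"
    using basis_card_eq_dim[OF subset_UNIV spB indB] by simp
  moreover have "card (B - U) = card B - card U" by (rule card_Diff_subset[OF finU UB])
  moreover have "card (Basis - {a}) = DIM('b) - 1" using a by (simp add: card_Diff_singleton)
  ultimately have "card (B - U) \<le> card (Basis - {a})" using dim by linarith
  then have "\<exists>e. e ` (B - U) \<subseteq> Basis - {a} \<and> inj_on e (B - U)"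
    by (intro card_le_inj) (use finB in auto)
  then obtain e where e: "e ` (B - U) \<subseteq> Basis - {a}" and inj_e: "inj_on e (B - U)"
    by blast
  obtain Q :: "'a \<Rightarrow> 'b" where linQ: "linear Q" and QB: "\<forall>v\<in>B. Q v = (if v \<in> U then 0 else e v)"
    using linear_independent_extend[OF indB, of "\<lambda>v. if v \<in> U then 0 else e v"] by (elim exE conjE)
  show thesis
  proof (rule that[OF linQ])
    show "a \<noteq> 0" using a nonzero_Basis by blast
  next
    fix h
    obtain r where "h = (\<Sum>v\<in>B. r v *\<^sub>R v)"
      using spB unfolding span_finite[OF finB] by blast
    moreover have "a \<bullet> e v = 0" if "v \<in> B - U" for v
    proof -
      have "e v \<in> Basis" "e v \<noteq> a" using e that by auto
      then show ?thesis using a by (simp add: inner_not_same_Basis)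
    qed
    ultimately show "a \<bullet> Q h = 0"
      using linear_basis_map_sum[OF linQ _ finB] QB by (simp add: inner_sum_right)
  next
    show "h \<in> span U" if "Q h = 0" for h
      by (rule linear_basis_map_kernel_subset_span[OF linQ QB[rule_format] finB spB UB])
        (use e inj_e that in auto)
  qed
qed

lemma lower_triangular_pairing_obtains_hyperplane_map:
  fixes L :: "nat \<Rightarrow> 'a::euclidean_space \<Rightarrow> real"
  assumes tri: "lower_triangular_pairing D L u" and lin: "\<And>j. j < D \<Longrightarrow> linear (L j)"
    and dim: "DIM('a) < DIM('b::euclidean_space) + D"
  obtains Q :: "'a \<Rightarrow> 'b::euclidean_space" and a where "linear Q" "a \<noteq> 0" "\<And>h. a \<bullet> Q h = 0"
    "\<And>h. Q h = 0 \<Longrightarrow> (\<And>j. j < D \<Longrightarrow> L j h = 0) \<Longrightarrow> h = 0"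
proof -
  note inj = lower_triangular_pairing_independent(1)[OF tri lin]
  obtain Q :: "'a \<Rightarrow> 'b" and a where Q: "linear Q" "a \<noteq> 0" "\<And>h. a \<bullet> Q h = 0"
    and ker: "\<And>h. Q h = 0 \<Longrightarrow> h \<in> span (u ` {..<D})"
    using obtain_hyperplane_map_with_kernel_in_span[OF lower_triangular_pairing_independent(2)[OF tri lin]]
      dim card_image[OF inj] by auto
  show thesis
  proof (rule that[OF Q])
    fix h assume "Q h = 0" and L: "\<And>j. j < D \<Longrightarrow> L j h = 0"
    from ker[OF \<open>Q h = 0\<close>]
    obtain c where h: "h = (\<Sum>j<D. c (u j) *\<^sub>R u j)"
      by (auto simp: span_finite sum.reindex[OF inj])
    then have "c (u j) = 0" if "j < D" for j
      using lower_triangular_pairing_coeffs_zero[OF tri lin, of "\<lambda>j. c (u j)"] L that by simp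
    then show "h = 0" using h by simp
  qed
qed

lemma linear_functionals_lower_bound:
  fixes Q :: "'a::euclidean_space \<Rightarrow> 'b::real_normed_vector" and L :: "nat \<Rightarrow> 'a \<Rightarrow> real"
  assumes linQ: "linear Q" and linL: "\<And>j. j < D \<Longrightarrow> linear (L j)"
    and inj: "\<And>h. Q h = 0 \<Longrightarrow> (\<And>j. j < D \<Longrightarrow> L j h = 0) \<Longrightarrow> h = 0"
  obtains C where "C > 0" "\<And>h. norm h \<le> C * (norm (Q h) + (\<Sum>j<D. \<bar>L j h\<bar>))"
proof -
  define N where "N h = norm (Q h) + (\<Sum>j<D. \<bar>L j h\<bar>)" for h
  have "continuous_on UNIV Q" "\<And>j. j < D \<Longrightarrow> continuous_on UNIV (L j)"
    using linQ linL by (simp_all add: linear_continuous_on linear_linear)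
  then have "continuous_on (sphere 0 1) N"
    unfolding N_def by (intro continuous_intros) (auto intro: continuous_on_subset)
  moreover obtain b :: 'a where "b \<in> Basis" using nonempty_Basis by blast
  then have "sphere (0::'a) 1 \<noteq> {}" by (metis mem_sphere_0 norm_Basis empty_iff)
  ultimately obtain s where s: "s \<in> sphere 0 1" and s_min: "\<And>t. t \<in> sphere 0 1 \<Longrightarrow> N s \<le> N t"
    using continuous_attains_inf[OF compact_sphere] by blast
  have "N s \<noteq> 0"
  proof
    assume "N s = 0"
    then have "Q s = 0 \<and> (\<forall>j<D. L j s = 0)"
      unfolding N_def by (simp add: add_nonneg_eq_0_iff sum_nonneg sum_nonneg_eq_0_iff)
    then have "s = 0" using inj by blast
    then show False using s by simp
  qed
  then have N_pos: "N s > 0" unfolding N_def by (simp add: sum_nonneg order_le_neq_trans)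
  have N_scale: "N (c *\<^sub>R h) = \<bar>c\<bar> * N h" for c h
    unfolding N_def using linQ linL by (simp add: linear_scale abs_mult sum_distrib_left distrib_left)
  show thesis
  proof (rule that[of "1 / N s"])
    fix h :: 'a
    show "norm h \<le> 1 / N s * (norm (Q h) + (\<Sum>j<D. \<bar>L j h\<bar>))"
    proof (cases "h = 0")
      case False
      then have "N s \<le> N ((1 / norm h) *\<^sub>R h)" by (intro s_min) simp
      also have "\<dots> = N h / norm h" using False by (simp add: N_scale)
      finally show ?thesis using False N_pos by (simp add: N_def field_simps)
    qed (use N_pos in \<open>simp add: sum_nonneg\<close>)
  qed (use N_pos in simp)
qed

section \<open>Negligible Lipschitz images of transversal zero sets\<close>

lemma eventually_onorm_diff_less:
  fixes L :: "'a::euclidean_space \<Rightarrow> 'a \<Rightarrow> 'b::real_normed_vector"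
  assumes lin: "\<And>z. bounded_linear (L z)" and cont: "\<And>h. isCont (\<lambda>z. L z h) z0" and "e > 0"
  shows "eventually (\<lambda>z. onorm (\<lambda>h. L z h - L z0 h) < e) (nhds z0)"
proof -
  have "isCont (\<lambda>z. Blinfun (L z)) z0"
    using cont lin by (intro continuous_blinfun_componentwiseI1) (simp add: bounded_linear_Blinfun_apply)
  then have "eventually (\<lambda>z. dist (Blinfun (L z)) (Blinfun (L z0)) < e) (nhds z0)"
    using \<open>e > 0\<close> unfolding continuous_at_eps_delta eventually_nhds_metric by blast
  moreover have "dist (Blinfun (L z)) (Blinfun (L z0)) = onorm (\<lambda>h. L z h - L z0 h)" for z
    by (simp add: dist_norm norm_blinfun.rep_eq minus_blinfun.rep_eq fun_diff_def bounded_linear_Blinfun_apply[OF lin])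
  ultimately show ?thesis by simp
qed

lemma differentiable_bound_linearization:
  fixes g :: "'a::real_normed_vector \<Rightarrow> 'b::real_normed_vector"
  assumes der: "\<And>z. z \<in> S \<Longrightarrow> (g has_derivative g' z) (at z)" and "convex S"
    and close: "\<And>z. z \<in> S \<Longrightarrow> onorm (\<lambda>h. g' z h - g' z0 h) \<le> e"
    and lin0: "bounded_linear (g' z0)" and "z \<in> S" "z' \<in> S"
  shows "norm (g z - g z' - g' z0 (z - z')) \<le> e * norm (z - z')"
proof -
  have "((\<lambda>z. g z - g' z0 z) has_derivative (\<lambda>h. g' z h - g' z0 h)) (at z within S)" if "z \<in> S" for z
    using has_derivative_at_withinI[OF der[OF that]] lin0
    by (intro has_derivative_diff bounded_linear_imp_has_derivative)
  from differentiable_bound[OF \<open>convex S\<close> this close \<open>z \<in> S\<close> \<open>z' \<in> S\<close>]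
  show ?thesis by (simp add: linear_diff[OF bounded_linear.linear[OF lin0]] algebra_simps)
qed

lemma negligible_image_of_hyperplane_embedding:
  fixes W :: "'a::euclidean_space set" and Q :: "'a \<Rightarrow> 'b::euclidean_space"
    and p :: "'a \<Rightarrow> 'c::euclidean_space"
  assumes lip: "B-lipschitz_on W p" and "a \<noteq> 0" and hyperplane: "\<And>z. z \<in> W \<Longrightarrow> a \<bullet> Q z = 0"
    and expand: "\<And>z z'. z \<in> W \<Longrightarrow> z' \<in> W \<Longrightarrow> norm (z - z') \<le> C * norm (Q z - Q z')"
    and "DIM('b) \<le> DIM('c)"
  shows "negligible (p ` W)"
proof -
  have "inj_on Q W"
    using expand by (intro inj_onI) fastforce
  define f where "f = p \<circ> inv_into W Q"
  have f: "f (Q z) = p z" if "z \<in> W" for z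
    using \<open>inj_on Q W\<close> that by (simp add: f_def)
  have "negligible (f ` Q ` W)"
  proof (rule negligible_locally_Lipschitz_image[OF \<open>DIM('b) \<le> DIM('c)\<close>])
    show "negligible (Q ` W)"
      using hyperplane by (intro negligible_subset[OF negligible_hyperplane[of a 0]]) (auto simp: \<open>a \<noteq> 0\<close>)
    fix y assume "y \<in> Q ` W"
    then obtain z where z: "z \<in> W" "y = Q z" by blast
    show "\<exists>T K. open T \<and> y \<in> T \<and> (\<forall>y'\<in>Q ` W \<inter> T. norm (f y' - f y) \<le> K * norm (y' - y))"
    proof (intro exI conjI ballI)
      fix y' assume "y' \<in> Q ` W \<inter> UNIV"
      then obtain z' where z': "z' \<in> W" "y' = Q z'" by blast
      have "norm (f y' - f y) \<le> B * norm (z' - z)"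
        using lipschitz_on_normD[OF lip z'(1) z(1)] z z' f by simp
      also have "\<dots> \<le> B * (C * norm (y' - y))"
        using expand[OF z'(1) z(1)] lipschitz_on_nonneg[OF lip] z z' by (simp add: mult_left_mono)
      finally show "norm (f y' - f y) \<le> (B * C) * norm (y' - y)" by simp
    qed auto
  qed
  moreover have "f ` Q ` W = p ` W" using f by (force simp: image_iff)
  ultimately show ?thesis by simp
qed

context
  fixes Z :: "'a::euclidean_space set" and p :: "'a \<Rightarrow> 'b::euclidean_space"
    and G :: "nat \<Rightarrow> 'a \<Rightarrow> real" and G' :: "nat \<Rightarrow> 'a \<Rightarrow> 'a \<Rightarrow> real" and D :: nat and B :: real
  assumes lip: "B-lipschitz_on UNIV p"
    and deriv: "\<And>j z. j < D \<Longrightarrow> (G j has_derivative G' j z) (at z)"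
    and cont: "\<And>j h z. j < D \<Longrightarrow> z \<in> Z \<Longrightarrow> isCont (\<lambda>z. G' j z h) z"
    and zero: "\<And>j z. j < D \<Longrightarrow> z \<in> Z \<Longrightarrow> G j z = 0"
    and tri: "\<And>z. z \<in> Z \<Longrightarrow> \<exists>u. lower_triangular_pairing D (\<lambda>j. G' j z) u"
    and dim: "DIM('a) < DIM('b) + D"
begin

lemma zero_set_locally_expanded:
  fixes Q :: "'a \<Rightarrow> 'v::real_normed_vector"
  assumes "z0 \<in> Z" and Q: "linear Q"
    and injQ: "\<And>h. Q h = 0 \<Longrightarrow> (\<And>j. j < D \<Longrightarrow> G' j z0 h = 0) \<Longrightarrow> h = 0"
  obtains K r where "r > 0"
    "\<forall>z\<in>Z \<inter> ball z0 r. \<forall>z'\<in>Z \<inter> ball z0 r. norm (z - z') \<le> K * norm (Q z - Q z')"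
proof -
  have bl: "bounded_linear (G' j z)" if "j < D" for j z
    using deriv[OF that] by (rule has_derivative_bounded_linear)
  have lin: "linear (G' j z)" if "j < D" for j z
    using has_derivative_linear[OF deriv[OF that]] .
  obtain C where "C > 0" and C: "\<And>h. norm h \<le> C * (norm (Q h) + (\<Sum>j<D. \<bar>G' j z0 h\<bar>))"
    using linear_functionals_lower_bound[of Q D "\<lambda>j. G' j z0", OF Q lin injQ] by blast
  define e where "e = 1 / (2 * C * (real D + 1))"
  have "e > 0" using \<open>C > 0\<close> by (simp add: e_def)
  have "C * (real D * e) = real D / (2 * (real D + 1))"
    using \<open>C > 0\<close> by (simp add: e_def)
  also have "\<dots> \<le> 1 / 2" by (simp add: field_simps)
  finally have "C * (real D * e) \<le> 1 / 2" .
  have "eventually (\<lambda>z. \<forall>j\<in>{..<D}. onorm (\<lambda>h. G' j z h - G' j z0 h) < e) (nhds z0)"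
    using bl cont \<open>z0 \<in> Z\<close> \<open>e > 0\<close> by (intro eventually_ball_finite ballI eventually_onorm_diff_less) auto
  then obtain r where "r > 0"
    and r: "\<And>z j. z \<in> ball z0 r \<Longrightarrow> j < D \<Longrightarrow> onorm (\<lambda>h. G' j z h - G' j z0 h) \<le> e"
    unfolding eventually_nhds_metric by (force simp: dist_commute)
  have expand: "norm (z - z') \<le> 2 * C * norm (Q z - Q z')" if "z \<in> Z \<inter> ball z0 r" "z' \<in> Z \<inter> ball z0 r" for z z'
  proof -
    have "\<bar>G' j z0 (z - z')\<bar> \<le> e * norm (z - z')" if "j < D" for j
    proof -
      have "norm (G j z - G j z' - G' j z0 (z - z')) \<le> e * norm (z - z')"
        using \<open>z \<in> Z \<inter> ball z0 r\<close> \<open>z' \<in> Z \<inter> ball z0 r\<close> \<open>j < D\<close>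
        by (intro differentiable_bound_linearization[where S="ball z0 r"] deriv r bl convex_ball) auto
      then show ?thesis using zero \<open>z \<in> Z \<inter> ball z0 r\<close> \<open>z' \<in> Z \<inter> ball z0 r\<close> \<open>j < D\<close> by simp
    qed
    then have "(\<Sum>j<D. \<bar>G' j z0 (z - z')\<bar>) \<le> real D * e * norm (z - z')"
      using sum_mono[of "{..<D}" "\<lambda>j. \<bar>G' j z0 (z - z')\<bar>" "\<lambda>_. e * norm (z - z')"] by simp
    then have "norm (z - z') \<le> C * (norm (Q (z - z')) + real D * e * norm (z - z'))"
      using C[of "z - z'"] \<open>C > 0\<close> by (smt (verit) mult_left_mono)
    also have "\<dots> = C * norm (Q (z - z')) + C * (real D * e) * norm (z - z')"
      by (simp add: algebra_simps)
    also have "\<dots> \<le> C * norm (Q (z - z')) + 1 / 2 * norm (z - z')"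
      using mult_right_mono[OF \<open>C * (real D * e) \<le> 1 / 2\<close> norm_ge_zero[of "z - z'"]] by simp
    finally show ?thesis by (simp add: linear_diff[OF Q])
  qed
  show thesis by (rule that[OF \<open>r > 0\<close>]) (use expand in blast)
qed

lemma negligible_image_zero_set_near:
  assumes "z0 \<in> Z"
  obtains r where "r > 0" "negligible (p ` (Z \<inter> ball z0 r))"
proof -
  have lin: "linear (G' j z)" if "j < D" for j z
    using has_derivative_linear[OF deriv[OF that]] .
  obtain u where u: "lower_triangular_pairing D (\<lambda>j. G' j z0) u" using tri[OF \<open>z0 \<in> Z\<close>] by blast
  obtain Q :: "'a \<Rightarrow> 'b" and a where Q: "linear Q" and "a \<noteq> 0" and aQ: "\<And>h. a \<bullet> Q h = 0"
    and injQ: "\<And>h. Q h = 0 \<Longrightarrow> (\<And>j. j < D \<Longrightarrow> G' j z0 h = 0) \<Longrightarrow> h = 0"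
    using lower_triangular_pairing_obtains_hyperplane_map[of D "\<lambda>j. G' j z0", OF u lin dim] by blast
  obtain K r where "r > 0"
    and expand: "\<forall>z\<in>Z \<inter> ball z0 r. \<forall>z'\<in>Z \<inter> ball z0 r. norm (z - z') \<le> K * norm (Q z - Q z')"
    by (rule zero_set_locally_expanded[OF \<open>z0 \<in> Z\<close> Q injQ])
  have "negligible (p ` (Z \<inter> ball z0 r))"
    using lipschitz_on_subset[OF lip subset_UNIV] \<open>a \<noteq> 0\<close> aQ expand[rule_format]
    by (rule negligible_image_of_hyperplane_embedding) simp_all
  with \<open>r > 0\<close> show thesis by (rule that)
qed

lemma negligible_image_zero_set: "negligible (p ` Z)"
proof -
  define F where "F = {T. open T \<and> negligible (p ` (Z \<inter> T))}"
  have cover: "Z \<subseteq> \<Union>F"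
  proof
    fix z assume "z \<in> Z"
    then obtain r where "r > 0" "negligible (p ` (Z \<inter> ball z r))"
      by (rule negligible_image_zero_set_near)
    then show "z \<in> \<Union>F" unfolding F_def using \<open>r > 0\<close> by (intro UnionI[of "ball z r"]) auto
  qed
  obtain F' where F': "F' \<subseteq> F" "countable F'" "\<Union>F' = \<Union>F"
    using Lindelof[of F] unfolding F_def by blast
  have "p ` Z = (\<Union>T\<in>F'. p ` (Z \<inter> T))" using cover F'(3) by blast
  moreover have "negligible (\<Union>T\<in>F'. p ` (Z \<inter> T))"
    using F'(1,2) unfolding F_def by (intro negligible_countable_Union) auto
  ultimately show ?thesis by simp
qed

end

section \<open>Polynomials of bounded degree\<close>

lemma finite_multi_idx: "finite (multi_idx d :: ('n::finite \<Rightarrow> nat) set)"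
proof (rule finite_subset)
  show "multi_idx d \<subseteq> (\<Pi>\<^sub>E i\<in>UNIV. {..d})"
  proof
    fix \<alpha> assume "\<alpha> \<in> multi_idx d"
    then have "\<alpha> i \<le> d" for i
      using member_le_sum[of i UNIV \<alpha>] by (simp add: multi_idx_def)
    then show "\<alpha> \<in> (\<Pi>\<^sub>E i\<in>UNIV. {..d})" by (simp add: PiE_UNIV_domain)
  qed
qed (simp add: finite_PiE)

definition poly_deg_le :: "nat \<Rightarrow> (real^'n::finite \<Rightarrow> real) \<Rightarrow> bool" where
  "poly_deg_le d f \<longleftrightarrow> (\<exists>c. \<forall>x. f x = (\<Sum>\<alpha>\<in>multi_idx d. c \<alpha> * monom_p \<alpha> x))"

lemma poly_deg_leI: "(\<And>x. f x = (\<Sum>\<alpha>\<in>multi_idx d. c \<alpha> * monom_p \<alpha> x)) \<Longrightarrow> poly_deg_le d f"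
  unfolding poly_deg_le_def by blast

lemma poly_deg_leE:
  assumes "poly_deg_le d f"
  obtains c where "\<And>x. f x = (\<Sum>\<alpha>\<in>multi_idx d. c \<alpha> * monom_p \<alpha> x)"
  using assms unfolding poly_deg_le_def by blast

lemma poly_deg_le_const: "poly_deg_le d (\<lambda>x. b)"
proof -
  have "(\<lambda>_. 0) \<in> multi_idx d" by (simp add: multi_idx_def)
  then have "b = (\<Sum>\<alpha>\<in>multi_idx d. (if \<alpha> = (\<lambda>_. 0) then b else 0) * monom_p \<alpha> x)" for x :: "real^'n"
    by (auto simp: if_distrib[of "\<lambda>t. t * _"] finite_multi_idx monom_p_def cong: if_cong)
  then show ?thesis by (rule poly_deg_leI)
qed

lemma poly_deg_le_mono:
  assumes "poly_deg_le d f" "d \<le> d'" shows "poly_deg_le d' f"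
proof -
  obtain c where f: "\<And>x. f x = (\<Sum>\<alpha>\<in>multi_idx d. c \<alpha> * monom_p \<alpha> x)"
    using assms(1) by (metis poly_deg_leE)
  have sub: "multi_idx d \<subseteq> multi_idx d'" using \<open>d \<le> d'\<close> by (auto simp: multi_idx_def)
  have "f x = (\<Sum>\<alpha>\<in>multi_idx d'. (if \<alpha> \<in> multi_idx d then c \<alpha> else 0) * monom_p \<alpha> x)" for x
    unfolding f by (rule sum.mono_neutral_cong_left[OF finite_multi_idx sub]) simp_all
  then show ?thesis by (rule poly_deg_leI)
qed

lemma poly_deg_le_add:
  assumes "poly_deg_le d f" "poly_deg_le d g" shows "poly_deg_le d (\<lambda>x. f x + g x)"
proof -
  obtain c c' where "\<And>x. f x = (\<Sum>\<alpha>\<in>multi_idx d. c \<alpha> * monom_p \<alpha> x)"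
    and "\<And>x. g x = (\<Sum>\<alpha>\<in>multi_idx d. c' \<alpha> * monom_p \<alpha> x)"
    using assms by (metis poly_deg_leE)
  then have "f x + g x = (\<Sum>\<alpha>\<in>multi_idx d. (c \<alpha> + c' \<alpha>) * monom_p \<alpha> x)" for x
    by (simp add: sum.distrib distrib_right)
  then show ?thesis by (rule poly_deg_leI)
qed

lemma poly_deg_le_cmult:
  assumes "poly_deg_le d f" shows "poly_deg_le d (\<lambda>x. b * f x)"
proof -
  obtain c where "\<And>x. f x = (\<Sum>\<alpha>\<in>multi_idx d. c \<alpha> * monom_p \<alpha> x)"
    using assms by (metis poly_deg_leE)
  then have "b * f x = (\<Sum>\<alpha>\<in>multi_idx d. (b * c \<alpha>) * monom_p \<alpha> x)" for x
    by (simp add: sum_distrib_left mult.assoc)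
  then show ?thesis by (rule poly_deg_leI)
qed

lemma poly_deg_le_sum:
  assumes "finite S" "\<And>s. s \<in> S \<Longrightarrow> poly_deg_le d (f s)" shows "poly_deg_le d (\<lambda>x. \<Sum>s\<in>S. f s x)"
  using assms by (induction S rule: finite_induct) (auto intro: poly_deg_le_add poly_deg_le_const)

lemma monom_p_mult_coord: "monom_p \<alpha> x * x $ i = monom_p (\<alpha>(i := Suc (\<alpha> i))) x"
proof -
  have "monom_p \<beta> x = (x $ i) ^ \<beta> i * (\<Prod>j\<in>UNIV - {i}. (x $ j) ^ \<beta> j)" for \<beta>
    unfolding monom_p_def by (subst prod.remove[of UNIV i]) auto
  moreover have "(\<Prod>j\<in>UNIV - {i}. (x $ j) ^ (\<alpha>(i := Suc (\<alpha> i))) j) = (\<Prod>j\<in>UNIV - {i}. (x $ j) ^ \<alpha> j)"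
    by (rule prod.cong) auto
  ultimately show ?thesis by simp
qed

lemma poly_deg_le_mult_coord:
  assumes "poly_deg_le d f" shows "poly_deg_le (Suc d) (\<lambda>x. f x * x $ i)"
proof -
  obtain c where f: "\<And>x. f x = (\<Sum>\<alpha>\<in>multi_idx d. c \<alpha> * monom_p \<alpha> x)"
    using assms by (metis poly_deg_leE)
  define raise where "raise \<alpha> = \<alpha>(i := Suc (\<alpha> i))" for \<alpha>
  have inj: "inj raise"
    by (rule injI) (metis raise_def fun_upd_same fun_upd_idem_iff fun_upd_upd nat.inject)
  have "sum (raise \<alpha>) UNIV = Suc (sum \<alpha> UNIV)" for \<alpha>
    unfolding raise_def by (simp add: sum.remove[of UNIV i] sum.cong[of "UNIV - {i}" _ "\<alpha>(i := _)" \<alpha>])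
  then have sub: "raise ` multi_idx d \<subseteq> multi_idx (Suc d)" by (auto simp: multi_idx_def)
  define c' where "c' \<beta> = (if \<beta> \<in> raise ` multi_idx d then c (inv raise \<beta>) else 0)" for \<beta>
  have "f x * x $ i = (\<Sum>\<alpha>\<in>multi_idx d. c \<alpha> * monom_p (raise \<alpha>) x)" for x
    by (simp add: f sum_distrib_right mult.assoc monom_p_mult_coord raise_def)
  also have "\<dots> x = (\<Sum>\<beta>\<in>raise ` multi_idx d. c' \<beta> * monom_p \<beta> x)" for x
    using inj by (simp add: sum.reindex inj_on_subset c'_def)
  also have "\<dots> x = (\<Sum>\<beta>\<in>multi_idx (Suc d). c' \<beta> * monom_p \<beta> x)" for x
    by (rule sum.mono_neutral_left[OF finite_multi_idx sub]) (simp add: c'_def)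
  finally show ?thesis by (rule poly_deg_leI)
qed

lemma poly_deg_le_mult_affine:
  assumes "poly_deg_le d f" shows "poly_deg_le (Suc d) (\<lambda>x. f x * ((x - y) \<bullet> v))"
proof -
  have "f x * ((x - y) \<bullet> v) = (\<Sum>i\<in>UNIV. v $ i * (f x * x $ i)) + (- (y \<bullet> v)) * f x" for x
    by (simp add: inner_diff_left inner_vec_def sum_distrib_left sum_subtractf algebra_simps)
  moreover have "poly_deg_le (Suc d) (\<lambda>x. (\<Sum>i\<in>UNIV. v $ i * (f x * x $ i)) + (- (y \<bullet> v)) * f x)"
    using assms
    by (intro poly_deg_le_add poly_deg_le_sum poly_deg_le_cmult poly_deg_le_mult_coord poly_deg_le_mono[OF assms]) auto
  ultimately show ?thesis by simp
qed

lemma poly_deg_le_prod_affine: "poly_deg_le n (\<lambda>x. \<Prod>i<n. (x - y i) \<bullet> v i)"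
proof (induction n)
  case 0
  show ?case by (simp add: poly_deg_le_const)
next
  case (Suc n)
  then show ?case using poly_deg_le_mult_affine[OF Suc, of "y n" "v n"] by simp
qed

definition poly_of_coeffs :: "('m::finite \<Rightarrow> ('n::finite \<Rightarrow> nat)) \<Rightarrow> real^'m \<Rightarrow> real^'n \<Rightarrow> real" where
  "poly_of_coeffs idx w x = (\<Sum>a\<in>UNIV. w $ a * monom_p (idx a) x)"

lemma poly_deg_le_imp_poly_of_coeffs:
  assumes idx: "bij_betw idx UNIV (multi_idx d)" and "poly_deg_le d f"
  obtains w where "poly_of_coeffs idx w = f"
proof -
  obtain c where f: "\<And>x. f x = (\<Sum>\<alpha>\<in>multi_idx d. c \<alpha> * monom_p \<alpha> x)"
    using assms(2) by (metis poly_deg_leE)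
  have "poly_of_coeffs idx (\<chi> a. c (idx a)) x = f x" for x
    unfolding poly_of_coeffs_def f using sum.reindex_bij_betw[OF idx, of "\<lambda>\<alpha>. c \<alpha> * monom_p \<alpha> x"] by simp
  then show thesis using that by blast
qed

lemma poly_of_coeffs_interpolating:
  fixes y :: "nat \<Rightarrow> real^'n::finite" and idx :: "'m::finite \<Rightarrow> ('n \<Rightarrow> nat)"
  assumes idx: "bij_betw idx UNIV (multi_idx d)" and "n \<le> d" and distinct: "\<And>i. i < n \<Longrightarrow> y i \<noteq> y n"
  shows "\<exists>w. (\<forall>i<n. poly_of_coeffs idx w (y i) = 0) \<and> poly_of_coeffs idx w (y n) = 1"
proof -
  define v where "v i = (1 / (norm (y n - y i))\<^sup>2) *\<^sub>R (y n - y i)" for i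
  define q where "q x = (\<Prod>i<n. (x - y i) \<bullet> v i)" for x
  have "poly_deg_le d q"
    unfolding q_def using poly_deg_le_prod_affine \<open>n \<le> d\<close> by (rule poly_deg_le_mono)
  then obtain w where w: "poly_of_coeffs idx w = q"
    using poly_deg_le_imp_poly_of_coeffs[OF idx] by blast
  have "poly_of_coeffs idx w (y i) = 0" if "i < n" for i
    unfolding w q_def using that by (intro prod_zero bexI[of _ i]) auto
  moreover have "(y n - y i) \<bullet> v i = 1" if "i < n" for i
    using distinct[OF that] by (simp add: v_def power2_norm_eq_inner)
  then have "poly_of_coeffs idx w (y n) = 1"
    unfolding w q_def by (intro prod.neutral) simp
  ultimately show ?thesis by blast
qed

section \<open>Derivatives of the perturbed iterates\<close>

definition monom_p_deriv :: "('n::finite \<Rightarrow> nat) \<Rightarrow> real^'n \<Rightarrow> real^'n \<Rightarrow> real" where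
  "monom_p_deriv \<alpha> x h =
     (\<Sum>i\<in>UNIV. (of_nat (\<alpha> i) * h $ i * (x $ i) ^ (\<alpha> i - 1)) * (\<Prod>j\<in>UNIV - {i}. (x $ j) ^ \<alpha> j))"

lemma monom_p_has_derivative: "(monom_p \<alpha> has_derivative monom_p_deriv \<alpha> x) (at x within S)"
  unfolding monom_p_def[abs_def] monom_p_deriv_def
  by (intro has_derivative_prod has_derivative_power bounded_linear_imp_has_derivative bounded_linear_vec_nth)

definition poly_of_coeffs_deriv :: "('m::finite \<Rightarrow> ('n::finite \<Rightarrow> nat)) \<Rightarrow> real^'m \<Rightarrow> real^'n \<Rightarrow> real^'n \<Rightarrow> real" where
  "poly_of_coeffs_deriv idx w x h = (\<Sum>a\<in>UNIV. w $ a * monom_p_deriv (idx a) x h)"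

lemma poly_of_coeffs_has_derivative:
  "((\<lambda>z. poly_of_coeffs idx (fst z) (snd z)) has_derivative
     (\<lambda>h. poly_of_coeffs idx (fst h) (snd z) + poly_of_coeffs_deriv idx (fst z) (snd z) (snd h))) (at z)"
proof -
  have "((\<lambda>z. fst z $ a * monom_p (idx a) (snd z)) has_derivative
      (\<lambda>h. fst z $ a * monom_p_deriv (idx a) (snd z) (snd h) + fst h $ a * monom_p (idx a) (snd z))) (at z)" for a
    by (intro has_derivative_mult has_derivative_compose[OF has_derivative_snd monom_p_has_derivative]
        bounded_linear_imp_has_derivative bounded_linear_compose[OF bounded_linear_vec_nth bounded_linear_fst]
        has_derivative_ident)
  then show ?thesis
    unfolding poly_of_coeffs_def poly_of_coeffs_deriv_def
    by (auto intro!: has_derivative_eq_rhs[OF has_derivative_sum] simp: sum.distrib add.commute)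
qed

lemma continuous_on_monom_p [continuous_intros]:
  "continuous_on S A \<Longrightarrow> continuous_on S (\<lambda>z. monom_p \<alpha> (A z))"
  unfolding monom_p_def by (intro continuous_intros)

lemma continuous_on_monom_p_deriv [continuous_intros]:
  "continuous_on S A \<Longrightarrow> continuous_on S B \<Longrightarrow> continuous_on S (\<lambda>z. monom_p_deriv \<alpha> (A z) (B z))"
  unfolding monom_p_deriv_def by (intro continuous_intros)

lemma perturb_eq: "perturb i1 idx \<phi> c x = \<phi> x + poly_of_coeffs idx c x *\<^sub>R axis i1 1"
  by (simp add: perturb_def poly_of_coeffs_def)

lemma perturb_zero: "perturb i1 idx \<phi> 0 = \<phi>"
  by (simp add: fun_eq_iff perturb_def)

lemma C3_imp_continuous_derivative:
  fixes f :: "'a::real_normed_vector \<Rightarrow> 'b::real_normed_vector"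
  assumes "C3 f"
  shows "\<exists>Df. (\<forall>x. (f has_derivative Df x) (at x)) \<and> continuous_on UNIV (\<lambda>(x, h). Df x h)"
proof -
  obtain Df :: "'a \<Rightarrow> 'a \<Rightarrow>\<^sub>L 'b" and D2 :: "'a \<Rightarrow> 'a \<Rightarrow>\<^sub>L 'a \<Rightarrow>\<^sub>L 'b"
    where der: "\<And>x. (f has_derivative blinfun_apply (Df x)) (at x)"
      and der2: "\<And>x. (Df has_derivative blinfun_apply (D2 x)) (at x)"
    using assms unfolding C3_def by blast
  have "continuous_on UNIV Df"
    using has_derivative_continuous[OF der2] by (simp add: continuous_at_imp_continuous_on)
  then have "continuous_on UNIV (\<lambda>(x, h). blinfun_apply (Df x) h)"
    unfolding case_prod_unfold
    by (intro bounded_bilinear.continuous_on[OF bounded_bilinear_blinfun_apply]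
        continuous_on_compose2[OF _ continuous_on_fst] continuous_intros) auto
  with der show ?thesis by (intro exI[of _ "\<lambda>x. blinfun_apply (Df x)"]) simp
qed

lemma funpow_orbit_distinct:
  fixes f :: "'a \<Rightarrow> 'a"
  assumes "inj f" "f x \<noteq> x"
    and no_period: "\<And>y p. 0 < p \<Longrightarrow> p < N \<Longrightarrow> (f ^^ p) y = y \<Longrightarrow> f y = y"
    and "i < n" "n < i + N"
  shows "(f ^^ i) x \<noteq> (f ^^ n) x"
proof
  assume eq: "(f ^^ i) x = (f ^^ n) x"
  have "(f ^^ (n - i)) ((f ^^ i) x) = (f ^^ n) x"
    using \<open>i < n\<close> funpow_add[of "n - i" i f] by simp
  then have "f ((f ^^ i) x) = (f ^^ i) x"
    using no_period[of "n - i"] eq \<open>i < n\<close> \<open>n < i + N\<close> by simp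
  then have "(f ^^ i) (f x) = (f ^^ i) x" by (simp add: funpow_swap1)
  then have "f x = x" using inj_fn[OF \<open>inj f\<close>, of i] by (simp add: inj_eq)
  with \<open>f x \<noteq> x\<close> show False ..
qed

lemma delay_map_eq_shift_iff:
  "delay_map i1 D f x = delay_map i1 D f ((f ^^ s) x) \<longleftrightarrow> (\<forall>j<D. (f ^^ j) x $ i1 = (f ^^ (j + s)) x $ i1)"
  unfolding delay_map_def by (auto simp: funpow_add)

(* Derivatives of the iterates in c and x together are those of the skew product
   (c, x) \<mapsto> (c, phi_c x).  They are given by an explicit chain-rule recursion so that their
   continuity in the base point can be proved. *)
locale skew_perturbation =
  fixes i1 :: "'n::finite" and idx :: "'m::finite \<Rightarrow> ('n \<Rightarrow> nat)"
    and \<phi> :: "real^'n \<Rightarrow> real^'n" and Df :: "real^'n \<Rightarrow> real^'n \<Rightarrow> real^'n"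
  assumes has_derivative_\<phi>: "\<And>x. (\<phi> has_derivative Df x) (at x)"
    and continuous_Df: "continuous_on UNIV (\<lambda>(x, h). Df x h)"
begin

abbreviation perturbed :: "real^'m \<Rightarrow> real^'n \<Rightarrow> real^'n" where
  "perturbed \<equiv> perturb i1 idx \<phi>"

definition skew_map :: "(real^'m) \<times> (real^'n) \<Rightarrow> (real^'m) \<times> (real^'n)" where
  "skew_map z = (fst z, perturbed (fst z) (snd z))"

definition skew_map_deriv :: "(real^'m) \<times> (real^'n) \<Rightarrow> (real^'m) \<times> (real^'n) \<Rightarrow> (real^'m) \<times> (real^'n)" where
  "skew_map_deriv z h = (fst h, Df (snd z) (snd h)
     + (poly_of_coeffs idx (fst h) (snd z) + poly_of_coeffs_deriv idx (fst z) (snd z) (snd h)) *\<^sub>R axis i1 1)"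

fun skew_iter_deriv :: "nat \<Rightarrow> (real^'m) \<times> (real^'n) \<Rightarrow> (real^'m) \<times> (real^'n) \<Rightarrow> (real^'m) \<times> (real^'n)" where
  "skew_iter_deriv 0 z h = h"
| "skew_iter_deriv (Suc j) z h = skew_map_deriv ((skew_map ^^ j) z) (skew_iter_deriv j z h)"

lemma skew_map_has_derivative: "(skew_map has_derivative skew_map_deriv z) (at z)"
proof -
  have "((\<lambda>z. \<phi> (snd z)) has_derivative (\<lambda>h. Df (snd z) (snd h))) (at z)"
    by (rule has_derivative_compose[OF has_derivative_snd has_derivative_\<phi>, OF has_derivative_ident])
  then show ?thesis
    unfolding skew_map_def[abs_def] skew_map_deriv_def perturb_eq
    by (intro has_derivative_Pair has_derivative_fst[OF has_derivative_ident] has_derivative_add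
        has_derivative_scaleR_left poly_of_coeffs_has_derivative)
qed

lemma skew_iter_has_derivative: "((skew_map ^^ j) has_derivative skew_iter_deriv j z) (at z)"
proof (induction j)
  case 0
  show ?case by (simp add: id_def has_derivative_ident)
next
  case (Suc j)
  from diff_chain_at[OF Suc skew_map_has_derivative] show ?case by (simp add: o_def)
qed

lemma skew_iter_apply: "(skew_map ^^ j) (c, x) = (c, (perturbed c ^^ j) x)"
  by (induction j) (auto simp: skew_map_def)

lemma continuous_on_\<phi>: "continuous_on UNIV \<phi>"
  by (rule continuous_at_imp_continuous_on, rule ballI, rule has_derivative_continuous[OF has_derivative_\<phi>])

lemma continuous_on_skew_iter: "continuous_on UNIV (skew_map ^^ j)"
proof (induction j)
  case (Suc j)
  have "continuous_on UNIV (\<lambda>z. \<phi> (snd z))"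
    by (rule continuous_on_compose2[OF continuous_on_\<phi>]) (auto intro: continuous_intros)
  then have "continuous_on UNIV skew_map"
    unfolding skew_map_def[abs_def] perturb_eq poly_of_coeffs_def by (intro continuous_intros)
  from continuous_on_compose[OF Suc continuous_on_subset[OF this subset_UNIV]]
  show ?case by simp
qed (simp add: continuous_on_id)

lemma continuous_on_skew_iter_deriv: "continuous_on UNIV (\<lambda>z. skew_iter_deriv j z h)"
proof (induction j)
  case (Suc j)
  let ?z = "\<lambda>z. (skew_map ^^ j) z" and ?h = "\<lambda>z. skew_iter_deriv j z h"
  have z: "continuous_on UNIV ?z" by (rule continuous_on_skew_iter)
  have "continuous_on UNIV (\<lambda>z. (snd (?z z), snd (?h z)))"
    using z Suc by (intro continuous_intros)
  from continuous_on_compose2[OF continuous_Df this]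
  have "continuous_on UNIV (\<lambda>z. Df (snd (?z z)) (snd (?h z)))" by simp
  then show ?case
    unfolding skew_iter_deriv.simps skew_map_deriv_def poly_of_coeffs_def poly_of_coeffs_deriv_def
    using z Suc by (intro continuous_intros)
qed simp

lemma fst_skew_iter_deriv: "fst (skew_iter_deriv j z h) = fst h"
  by (induction j) (simp_all add: skew_map_deriv_def)

definition delay_gap :: "nat \<Rightarrow> nat \<Rightarrow> (real^'m) \<times> (real^'n) \<Rightarrow> real" where
  "delay_gap s j z = snd ((skew_map ^^ j) z) $ i1 - snd ((skew_map ^^ (j + s)) z) $ i1"

definition delay_gap_deriv :: "nat \<Rightarrow> nat \<Rightarrow> (real^'m) \<times> (real^'n) \<Rightarrow> (real^'m) \<times> (real^'n) \<Rightarrow> real" where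
  "delay_gap_deriv s j z h = snd (skew_iter_deriv j z h) $ i1 - snd (skew_iter_deriv (j + s) z h) $ i1"

lemma delay_gap_apply:
  "delay_gap s j (c, x) = (perturbed c ^^ j) x $ i1 - (perturbed c ^^ (j + s)) x $ i1"
  by (simp add: delay_gap_def skew_iter_apply)

lemma delay_gap_has_derivative: "(delay_gap s j has_derivative delay_gap_deriv s j z) (at z)"
proof -
  have "bounded_linear (\<lambda>z::(real^'m) \<times> (real^'n). snd z $ i1)"
    by (intro bounded_linear_compose[OF bounded_linear_vec_nth bounded_linear_snd])
  note coord = bounded_linear.has_derivative[OF this skew_iter_has_derivative]
  show ?thesis
    unfolding delay_gap_def[abs_def] delay_gap_deriv_def[abs_def] by (intro has_derivative_diff coord)
qed

lemma isCont_delay_gap_deriv: "isCont (\<lambda>z. delay_gap_deriv s j z h) z"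
proof -
  have "continuous_on UNIV (\<lambda>z. delay_gap_deriv s j z h)"
    unfolding delay_gap_deriv_def by (intro continuous_intros continuous_on_skew_iter_deriv)
  then show ?thesis using continuous_on_eq_continuous_at[OF open_UNIV] by blast
qed

(* Moving the parameter in direction w changes the orbit of x only through the values of the
   polynomial with coefficients w at earlier orbit points. *)
lemma skew_iter_deriv_coeff_direction:
  assumes vanish: "\<And>i. i < n \<Longrightarrow> poly_of_coeffs idx w ((perturbed c ^^ i) x) = 0"
  shows skew_iter_deriv_coeff_direction_zero: "l \<le> n \<Longrightarrow> snd (skew_iter_deriv l (c, x) (w, 0)) = 0"
    and "snd (skew_iter_deriv (Suc n) (c, x) (w, 0)) = poly_of_coeffs idx w ((perturbed c ^^ n) x) *\<^sub>R axis i1 1"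
proof -
  have "Df y 0 = 0" for y
    using has_derivative_bounded_linear[OF has_derivative_\<phi>] by (simp add: linear_simps)
  moreover have "poly_of_coeffs_deriv idx c y 0 = 0" for y
    by (simp add: poly_of_coeffs_deriv_def monom_p_deriv_def)
  ultimately have step: "snd (skew_iter_deriv (Suc l) (c, x) (w, 0))
      = poly_of_coeffs idx w ((perturbed c ^^ l) x) *\<^sub>R axis i1 1"
    if "snd (skew_iter_deriv l (c, x) (w, 0)) = 0" for l
    using that fst_skew_iter_deriv[of l "(c, x)" "(w, 0)"]
    by (simp add: skew_map_deriv_def skew_iter_apply prod_eq_iff)
  show zero: "snd (skew_iter_deriv l (c, x) (w, 0)) = 0" if "l \<le> n" for l
    using that by (induction l) (simp_all add: step vanish del: skew_iter_deriv.simps(2))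
  show "snd (skew_iter_deriv (Suc n) (c, x) (w, 0)) = poly_of_coeffs idx w ((perturbed c ^^ n) x) *\<^sub>R axis i1 1"
    by (simp add: step zero del: skew_iter_deriv.simps(2))
qed

lemma delay_gap_deriv_lower_triangular:
  assumes idx: "bij_betw idx UNIV (multi_idx (2 * D - 1))" and "1 \<le> s" "s \<le> D"
    and distinct: "\<And>i n. i < n \<Longrightarrow> n < D + s \<Longrightarrow> (perturbed c ^^ i) x \<noteq> (perturbed c ^^ n) x"
  shows "\<exists>u. lower_triangular_pairing D (\<lambda>j. delay_gap_deriv s j (c, x)) u"
proof -
  let ?y = "\<lambda>l. (perturbed c ^^ l) x"
  have "\<forall>j\<in>{..<D}. \<exists>w. (\<forall>i < j + s - 1. poly_of_coeffs idx w (?y i) = 0)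
      \<and> poly_of_coeffs idx w (?y (j + s - 1)) = 1"
  proof
    fix j assume "j \<in> {..<D}"
    then have le: "j + s - 1 \<le> 2 * D - 1" using \<open>s \<le> D\<close> by simp
    have neq: "?y i \<noteq> ?y (j + s - 1)" if "i < j + s - 1" for i
      using distinct that \<open>j \<in> {..<D}\<close> by simp
    from poly_of_coeffs_interpolating[where y = ?y, OF idx le neq]
    show "\<exists>w. (\<forall>i < j + s - 1. poly_of_coeffs idx w (?y i) = 0)
      \<and> poly_of_coeffs idx w (?y (j + s - 1)) = 1" .
  qed
  from bchoice[OF this] obtain W where W: "\<forall>j\<in>{..<D}. (\<forall>i < j + s - 1. poly_of_coeffs idx (W j) (?y i) = 0)
      \<and> poly_of_coeffs idx (W j) (?y (j + s - 1)) = 1"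
    by (elim exE) (rule that)
  (* The j-th witness direction fixes the first j + s - 1 orbit points to first order and
     moves the next one along the first axis. *)
  have zero: "snd (skew_iter_deriv l (c, x) (W j, 0)) = 0" if "j < D" "l \<le> j + s - 1" for j l
    using W that by (intro skew_iter_deriv_coeff_direction_zero) auto
  have one: "snd (skew_iter_deriv (j + s) (c, x) (W j, 0)) = axis i1 1" if "j < D" for j
  proof -
    have "Suc (j + s - 1) = j + s" using \<open>1 \<le> s\<close> by simp
    then show ?thesis
      using skew_iter_deriv_coeff_direction(2)[of "j + s - 1" "W j" c x] W that by simp
  qed
  show ?thesis
    unfolding lower_triangular_pairing_def delay_gap_deriv_def
  proof (intro exI[of _ "\<lambda>j. (W j, 0)"] conjI allI impI)
    fix i j assume "i < j" "j < D"
    then show "snd (skew_iter_deriv i (c, x) (W j, 0)) $ i1 - snd (skew_iter_deriv (i + s) (c, x) (W j, 0)) $ i1 = 0"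
      using zero[of j i] zero[of j "i + s"] \<open>1 \<le> s\<close> by simp
  next
    fix j assume "j < D"
    then show "snd (skew_iter_deriv j (c, x) (W j, 0)) $ i1 - snd (skew_iter_deriv (j + s) (c, x) (W j, 0)) $ i1 \<noteq> 0"
      using zero[of j j] one \<open>1 \<le> s\<close> by simp
  qed
qed

theorem negligible_delay_coincidence_params:
  assumes idx: "bij_betw idx UNIV (multi_idx (2 * D - 1))" and "1 \<le> s" "s \<le> D" and "CARD('n) < D"
    and inj: "\<And>c. c \<in> P \<Longrightarrow> inj (perturbed c)"
    and aperiodic: "\<And>c y p. c \<in> P \<Longrightarrow> 0 < p \<Longrightarrow> p < 2 * D \<Longrightarrow> (perturbed c ^^ p) y = y \<Longrightarrow> perturbed c y = y"
  shows "negligible {c \<in> P. \<exists>x. perturbed c x \<noteq> x \<and>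
      delay_map i1 D (perturbed c) x = delay_map i1 D (perturbed c) ((perturbed c ^^ s) x)}"
proof -
  let ?Z = "{(c, x). c \<in> P \<and> perturbed c x \<noteq> x \<and>
      delay_map i1 D (perturbed c) x = delay_map i1 D (perturbed c) ((perturbed c ^^ s) x)}"
  have "negligible (fst ` ?Z)"
  proof (rule negligible_image_zero_set[where B = 1 and G = "delay_gap s" and G' = "delay_gap_deriv s"])
    show "1-lipschitz_on UNIV fst"
      by (intro lipschitz_onI) (simp_all add: dist_fst_le)
    show "(delay_gap s j has_derivative delay_gap_deriv s j z) (at z)" for j z
      by (rule delay_gap_has_derivative)
    show "isCont (\<lambda>z. delay_gap_deriv s j z h) z" for j h z
      by (rule isCont_delay_gap_deriv)
    show "delay_gap s j z = 0" if "j < D" "z \<in> ?Z" for j z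
      using that by (auto simp: delay_gap_apply delay_map_eq_shift_iff)
    show "\<exists>u. lower_triangular_pairing D (\<lambda>j. delay_gap_deriv s j z) u" if "z \<in> ?Z" for z
    proof -
      obtain c x where z: "z = (c, x)" and "c \<in> P" "perturbed c x \<noteq> x"
        using \<open>z \<in> ?Z\<close> by blast
      have "(perturbed c ^^ i) x \<noteq> (perturbed c ^^ n) x" if "i < n" "n < D + s" for i n
      proof (rule funpow_orbit_distinct[OF inj[OF \<open>c \<in> P\<close>] \<open>perturbed c x \<noteq> x\<close> aperiodic[OF \<open>c \<in> P\<close>]])
        show "n < i + 2 * D" using that \<open>s \<le> D\<close> by linarith
      qed (use that in auto)
      then show ?thesis
        unfolding z using delay_gap_deriv_lower_triangular[OF idx \<open>1 \<le> s\<close> \<open>s \<le> D\<close>] by blast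
    qed
    show "DIM((real^'m) \<times> (real^'n)) < DIM(real^'m) + D"
      using \<open>CARD('n) < D\<close> by simp
  qed
  moreover have "fst ` ?Z = {c \<in> P. \<exists>x. perturbed c x \<noteq> x \<and>
      delay_map i1 D (perturbed c) x = delay_map i1 D (perturbed c) ((perturbed c ^^ s) x)}"
    by force
  ultimately show ?thesis by simp
qed

end

section \<open>Lebesgue points\<close>

lemma measure_Int_eq_of_negligible_Diff:
  assumes "S \<in> sets lebesgue" "negligible (S - A)"
  shows "measure lebesgue (A \<inter> S) = measure lebesgue S"
proof -
  have "A \<inter> S = S - (S - A)" by blast
  then show ?thesis
    using measure_Diff_null_set[OF assms(1)] assms(2) by (simp add: negligible_iff_null_sets)
qed

lemma rel_prob_eq_1_of_negligible_Diff:
  assumes "S \<in> sets lebesgue" "measure lebesgue S \<noteq> 0" "negligible (S - A)"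
  shows "rel_prob A S = 1"
  using measure_Int_eq_of_negligible_Diff[OF assms(1,3)] assms(2) by (simp add: rel_prob_def)

lemma lebesgue_point_of_negligible_Diff:
  fixes S :: "'a::euclidean_space set"
  assumes "open S" "p \<in> S" "negligible (S - A)"
  shows "lebesgue_point A p"
  unfolding lebesgue_point_def
proof (rule tendsto_eventually)
  obtain r where "r > 0" "ball p r \<subseteq> S"
    using assms(1,2) open_contains_ball by blast
  have "measure lebesgue (A \<inter> ball p \<epsilon>) / measure lebesgue (ball p \<epsilon>) = 1" if "0 < \<epsilon>" "\<epsilon> < r" for \<epsilon>
  proof -
    have "negligible (ball p \<epsilon> - A)"
      using \<open>ball p r \<subseteq> S\<close> \<open>\<epsilon> < r\<close> by (intro negligible_subset[OF assms(3)]) auto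
    then show ?thesis using \<open>0 < \<epsilon>\<close> by (simp add: measure_Int_eq_of_negligible_Diff)
  qed
  then show "\<forall>\<^sub>F \<epsilon> in at_right 0. measure lebesgue (A \<inter> ball p \<epsilon>) / measure lebesgue (ball p \<epsilon>) = 1"
    unfolding eventually_at_right_field using \<open>r > 0\<close> by blast
qed

theorem lemma17:
  fixes \<phi> :: "real^'n::finite \<Rightarrow> real^'n"
    and i1 :: 'n
    and idx :: "'m::finite \<Rightarrow> ('n \<Rightarrow> nat)"
    and D m k :: nat
    and r R a0 \<delta> :: real
    and \<xi> :: "nat \<Rightarrow> real^'m \<Rightarrow> real^'n"
  defines "\<phi>c \<equiv> perturb i1 idx \<phi>"
    and "K \<equiv> cball (0::real^'n) r"
    and "Kp \<equiv> cball (0::real^'n) R"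
    and "\<Delta> \<equiv> (INF p \<in> {(c, i, j). norm c \<le> a0 \<and> i \<in> {1..m} \<and> j \<in> {1..m} \<and> i \<noteq> j
                        \<and> \<xi> i c \<in> cball 0 r \<and> \<xi> j c \<in> cball 0 r}.
                 ereal (dist (\<xi> (fst (snd p)) (fst p)) (\<xi> (snd (snd p)) (fst p))))"
    and "A \<equiv> {c. norm c < a0 \<and>
               (\<forall>x1\<in>cball 0 r. (\<forall>j\<in>{1..m}. norm (x1 - \<xi> j c) \<ge> 3 * \<delta>) \<longrightarrow>
                   delay_map i1 D (perturb i1 idx \<phi> c) x1 \<noteq>
                   delay_map i1 D (perturb i1 idx \<phi> c) ((perturb i1 idx \<phi> c ^^ (k - 1)) x1))}"
  assumes idx_bij: "bij_betw idx UNIV (multi_idx (2 * D - 1))"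
    and D_ge: "D \<ge> 2 * CARD('n) + 1"
    and r_pos: "0 < r" and rR: "r < R"
    and phi_Kp: "\<forall>x\<in>K. \<forall>j\<le>D - 1. (\<phi> ^^ j) x \<in> Kp"
    and a0_pos: "0 < a0"
    and phic_Kp: "\<forall>c. norm c \<le> a0 \<longrightarrow> (\<forall>x\<in>K. \<forall>j\<le>D - 1. (\<phi>c c ^^ j) x \<in> Kp)"
    and diffeo: "\<forall>c. norm c \<le> a0 \<longrightarrow> C3_diffeo (\<phi>c c)"
    and fixpts: "\<forall>c. norm c \<le> a0 \<longrightarrow> {x. \<phi>c c x = x} = (\<lambda>i. \<xi> i c) ` {1..m}"
    and fix_inj: "\<forall>c. norm c \<le> a0 \<longrightarrow> inj_on (\<lambda>i. \<xi> i c) {1..m}"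
    and fix_cont: "\<forall>i\<in>{1..m}. continuous_on (cball 0 a0) (\<xi> i)"
    and no_periodic: "\<forall>c. norm c \<le> a0 \<longrightarrow>
        (\<forall>x n. 1 \<le> n \<and> n < 2 * D \<and> (\<phi>c c ^^ n) x = x \<longrightarrow> \<phi>c c x = x)"
    and hyp: "\<forall>c. norm c \<le> a0 \<longrightarrow> (\<forall>i\<in>{1..m}. hyperbolic_fp (\<phi>c c) (\<xi> i c))"
    and sep: "\<forall>c. norm c \<le> a0 \<longrightarrow>
        (\<forall>i\<in>{1..m}. \<forall>j\<in>{1..m}. i \<noteq> j \<longrightarrow> \<xi> i c $ i1 \<noteq> \<xi> j c $ i1)"
    and immersive: "\<forall>c. norm c \<le> a0 \<longrightarrow>
        (\<forall>i\<in>{1..m}. delay_immersive i1 D (\<phi>c c) (\<xi> i c))"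
    and delta_pos: "0 < \<delta>" and delta_lt: "ereal (3 * \<delta>) < \<Delta>"
    and k_range: "k \<in> {2..D}"
  shows "(\<forall>p\<in>ball 0 a0. lebesgue_point A p) \<and> rel_prob A (ball 0 a0) = 1"
proof -
  have "C3 \<phi>"
    using diffeo[rule_format, of 0] a0_pos by (simp add: C3_diffeo_def \<phi>c_def perturb_zero)
  then obtain Df where "\<forall>x. (\<phi> has_derivative Df x) (at x)" "continuous_on UNIV (\<lambda>(x, h). Df x h)"
    using C3_imp_continuous_derivative by blast
  then interpret skew_perturbation i1 idx \<phi> Df
    by unfold_locales auto
  let ?N = "{c \<in> cball 0 a0. \<exists>x. perturbed c x \<noteq> x \<and>
      delay_map i1 D (perturbed c) x = delay_map i1 D (perturbed c) ((perturbed c ^^ (k - 1)) x)}"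
  have "negligible ?N"
  proof (rule negligible_delay_coincidence_params)
    show "inj (perturbed c)" if "c \<in> cball 0 a0" for c
      using diffeo that by (simp add: \<phi>c_def C3_diffeo_def bij_is_inj)
    show "perturbed c y = y" if "c \<in> cball 0 a0" "0 < p" "p < 2 * D" "(perturbed c ^^ p) y = y" for c y p
      using no_periodic that unfolding \<phi>c_def by (metis Suc_leI mem_cball_0 One_nat_def)
  qed (use idx_bij k_range D_ge in auto)
  moreover have "ball 0 a0 - A \<subseteq> ?N"
  proof
    fix c assume "c \<in> ball 0 a0 - A"
    then obtain x where c: "norm c \<le> a0" and far: "\<forall>j\<in>{1..m}. 3 * \<delta> \<le> norm (x - \<xi> j c)"
      and coincide: "delay_map i1 D (perturbed c) x = delay_map i1 D (perturbed c) ((perturbed c ^^ (k - 1)) x)"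
      unfolding A_def by auto
    have "x \<notin> (\<lambda>i. \<xi> i c) ` {1..m}"
      using far delta_pos by force
    then have "perturbed c x \<noteq> x"
      using fixpts c unfolding \<phi>c_def by blast
    with c coincide show "c \<in> ?N" by auto
  qed
  ultimately have null: "negligible (ball 0 a0 - A)"
    by (rule negligible_subset)
  show ?thesis
    using lebesgue_point_of_negligible_Diff[OF open_ball _ null]
      rel_prob_eq_1_of_negligible_Diff[OF _ _ null] a0_pos by auto
qed

end
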